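(* The set of covectors $\mathcal L$ of a finitary affine oriented matroid $(E,\mathcal L)$ is countable.
   Context: A sign vector on a set $E$ is an element of $\{+,-,0\}^E$; $-X$ is defined by $(-X)(e)=-X(e)$. The zero set is $z(X)=\{e:X(e)=0\}$. The separator of $X,Y$ is $S(X,Y)=\{e\in E: X(e)\neq0\neq Y(e),\ X(e)\neq Y(e)\}$. The composition $X\circ Y$ is given by $(X\circ Y)(e)=X(e)$ if $X(e)\neq0$ and $Y(e)$ otherwise; $X\oplus Y$ is $0$ on $S(X,Y)$ and equals $X\circ Y$ elsewhere. For sets of sign vectors, $\mathcal A\circ\mathcal B=\{X\circ Y:X\in\mathcal A,Y\in\mathcal B\}$, $-\mathcal A=\{-X:X\in\mathcal A\}$. Sign vectors are partially ordered componentwise via $0<+$, $0<-$ ($+$ and $-$ incomparable). For $\mathcal L\subseteq\{+,-,0\}^E$ let $I_e(X,Y;\mathcal L)=\{Z\in\mathcal L:Z(e)=0,\ Z(f)=(X\circ Y)(f)\ \forall f\notin S(X,Y)\}$, $I(X,Y;\mathcal L)=\bigcup_{e\in S(X,Y)}I_e(X,Y;\mathcal L)$ and $\mathcal P(\mathcal L)=\{X\oplus(-Y):X,Y\in\mathcal L,\ I(X,-Y;\mathcal L)=I(-X,Y;\mathcal L)=\emptyset\}$. A finitary affine oriented matroid (FAOM) is a pair $(E,\mathcal L)$, $\mathcal L\subseteq\{+,-,0\}^E$, satisfying (S) $|S(X,Y)|<\infty$ for $X,Y\in\mathcal L$; (Z) $|z(X)|<\infty$ for $X\in\mathcal L$;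 (I) $\{Y\in\mathcal L:Y\le X\}$ is finite for each $X\in\mathcal L$; (FS) $\mathcal L\circ(-\mathcal L)\subseteq\mathcal L$; (SE) for all $X,Y\in\mathcal L$ and $e\in S(X,Y)$, $I_e(X,Y;\mathcal L)\ne\emptyset$; (P) $\mathcal P(\mathcal L)\circ\mathcal L\subseteq\mathcal L$. *)

theory Defs
  imports Main "HOL-Library.Countable_Set"
begin

datatype sign = Zero | Pos | Neg

fun sneg :: "sign \<Rightarrow> sign" where
  "sneg Zero = Zero" | "sneg Pos = Neg" | "sneg Neg = Pos"

text \<open>Sign vectors on the ground set E, where E is the universe of the type 'e.\<close>
type_synonym 'e signvec = "'e \<Rightarrow> sign"

definition sv_neg :: "'e signvec \<Rightarrow> 'e signvec" where
  "sv_neg X = (\<lambda>e. sneg (X e))"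

definition zset :: "'e signvec \<Rightarrow> 'e set" where
  "zset X = {e. X e = Zero}"

definition sep :: "'e signvec \<Rightarrow> 'e signvec \<Rightarrow> 'e set" where
  "sep X Y = {e. X e \<noteq> Zero \<and> Y e \<noteq> Zero \<and> X e \<noteq> Y e}"

definition comp :: "'e signvec \<Rightarrow> 'e signvec \<Rightarrow> 'e signvec" where
  "comp X Y = (\<lambda>e. if X e \<noteq> Zero then X e else Y e)"

definition sv_oplus :: "'e signvec \<Rightarrow> 'e signvec \<Rightarrow> 'e signvec" where
  "sv_oplus X Y = (\<lambda>e. if e \<in> sep X Y then Zero else comp X Y e)"

definition set_comp :: "'e signvec set \<Rightarrow> 'e signvec set \<Rightarrow> 'e signvec set" where
  "set_comp A B = {comp X Y | X Y. X \<in> A \<and> Y \<in> B}"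

definition set_neg :: "'e signvec set \<Rightarrow> 'e signvec set" where
  "set_neg A = sv_neg ` A"

definition sv_le :: "'e signvec \<Rightarrow> 'e signvec \<Rightarrow> bool" where
  "sv_le X Y = (\<forall>e. X e = Zero \<or> X e = Y e)"

definition Ie :: "'e \<Rightarrow> 'e signvec \<Rightarrow> 'e signvec \<Rightarrow> 'e signvec set \<Rightarrow> 'e signvec set" where
  "Ie e X Y L = {Z \<in> L. Z e = Zero \<and> (\<forall>f. f \<notin> sep X Y \<longrightarrow> Z f = comp X Y f)}"

definition II :: "'e signvec \<Rightarrow> 'e signvec \<Rightarrow> 'e signvec set \<Rightarrow> 'e signvec set" where
  "II X Y L = (\<Union>e\<in>sep X Y. Ie e X Y L)"

definition PP :: "'e signvec set \<Rightarrow> 'e signvec set" where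
  "PP L = {sv_oplus X (sv_neg Y) | X Y. X \<in> L \<and> Y \<in> L \<and>
             II X (sv_neg Y) L = {} \<and> II (sv_neg X) Y L = {}}"

definition FAOM :: "'e signvec set \<Rightarrow> bool" where
  "FAOM L \<longleftrightarrow>
     (\<forall>X\<in>L. \<forall>Y\<in>L. finite (sep X Y)) \<and>
     (\<forall>X\<in>L. finite (zset X)) \<and>
     (\<forall>X\<in>L. finite {Y \<in> L. sv_le Y X}) \<and>
     set_comp L (set_neg L) \<subseteq> L \<and>
     (\<forall>X\<in>L. \<forall>Y\<in>L. \<forall>e\<in>sep X Y. Ie e X Y L \<noteq> {}) \<and>
     set_comp (PP L) L \<subseteq> L"

end

theory Submission
  imports Defs "HOL-Library.FuncSet"
begin

text \<open>
  Measure the distance of two covectors by the number of coordinates where they disagree.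
  Comparable covectors are few: below a covector by (I), above it by (Z).
  If A and B disagree somewhere, the covectors A' = A \<circ> -B and B' = B \<circ> -A lie above A and B,
  have equal zero sets and separate exactly where A and B disagree.
  Eliminating one separating coordinate e by (SE) yields a Z, and Z \<circ> -B', Z \<circ> -A' lie
  above Z at distance smaller than that of A and B from A' and B' respectively.
  Hence the covectors within distance n+1 of a finite set are reached by chains of six
  steps, each between comparable covectors or of distance less than n, and induction on n shows that all Hamming
  neighbourhoods of finite sets of covectors are finite.
\<close>

definition disagree :: "'e signvec \<Rightarrow> 'e signvec \<Rightarrow> 'e set" where
  "disagree X Y = {f. X f \<noteq> Y f}"

definition comparables :: "'e signvec set \<Rightarrow> 'e signvec set \<Rightarrow> 'e signvec set" where
  "comparables L S = {X \<in> L. \<exists>Y\<in>S. sv_le X Y \<or> sv_le Y X}"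

definition hamming_nbhd :: "'e signvec set \<Rightarrow> 'e signvec set \<Rightarrow> nat \<Rightarrow> 'e signvec set" where
  "hamming_nbhd L S n = {X \<in> L. \<exists>Y\<in>S. card (disagree Y X) < n}"

lemma disagree_commute: "disagree X Y = disagree Y X"
  by (auto simp: disagree_def)

lemma sep_commute: "sep X Y = sep Y X"
  by (auto simp: sep_def)

lemma sv_le_comp: "sv_le X (comp X Y)"
  by (simp add: sv_le_def comp_def)

lemma comparables_subset: "comparables L S \<subseteq> L"
  by (auto simp: comparables_def)

lemma hamming_nbhd_subset: "hamming_nbhd L S n \<subseteq> L"
  by (auto simp: hamming_nbhd_def)

lemma FAOM_comp_neg_mem:
  assumes "FAOM L" "X \<in> L" "Y \<in> L"
  shows "comp X (sv_neg Y) \<in> L"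
  using assms unfolding FAOM_def set_comp_def set_neg_def by blast

lemma finite_sv_le_above:
  assumes "finite (zset Y)"
  shows "finite {X. sv_le Y X}"
proof -
  have "X f = Y f" if "sv_le Y X" "f \<notin> zset Y" for X f
    using that by (auto simp: sv_le_def zset_def)
  then have "inj_on (\<lambda>X. restrict X (zset Y)) {X. sv_le Y X}"
    by (intro inj_onI) (metis restrict_apply' mem_Collect_eq ext)
  moreover have "(\<lambda>X. restrict X (zset Y)) ` {X. sv_le Y X} \<subseteq> PiE (zset Y) (\<lambda>_. UNIV)"
    by auto
  moreover have "finite (UNIV :: sign set)"
  proof -
    have "(UNIV :: sign set) = {Zero, Pos, Neg}"
      by (auto intro: sign.exhaust)
    then show ?thesis
      by (metis finite.emptyI finite.insertI)
  qed
  then have "finite (PiE (zset Y) (\<lambda>_. UNIV :: sign set))"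
    using assms by (intro finite_PiE)
  ultimately show ?thesis
    using finite_imageD finite_subset by metis
qed

lemma finite_comparables:
  assumes "FAOM L" "finite S" "S \<subseteq> L"
  shows "finite (comparables L S)"
proof -
  have "comparables L S \<subseteq> (\<Union>Y\<in>S. {X \<in> L. sv_le X Y} \<union> {X. sv_le Y X})"
    by (auto simp: comparables_def)
  moreover have "finite {X \<in> L. sv_le X Y} \<and> finite {X. sv_le Y X}" if "Y \<in> S" for Y
    using assms that finite_sv_le_above unfolding FAOM_def by blast
  ultimately show ?thesis
    using assms(2) by (simp add: finite_subset)
qed

lemma sep_comp_neg_comp_neg:
  "sep (comp A (sv_neg B)) (comp B (sv_neg A)) = disagree A B"
proof -
  have "f \<in> sep (comp A (sv_neg B)) (comp B (sv_neg A)) \<longleftrightarrow> f \<in> disagree A B" for f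
    by (cases "A f"; cases "B f") (auto simp: sep_def disagree_def comp_def sv_neg_def)
  then show ?thesis
    by blast
qed

lemma comp_neg_eq_off_sep:
  assumes "f \<notin> sep (comp A (sv_neg B)) (comp B (sv_neg A))"
  shows "comp B (sv_neg A) f = comp A (sv_neg B) f"
  using assms by (cases "A f"; cases "B f") (auto simp: sep_def comp_def sv_neg_def)

lemma disagree_comp_neg_subset:
  assumes "e \<in> sep A B" "Z e = Zero"
    and "\<And>f. f \<notin> sep A B \<Longrightarrow> Z f = A f \<and> B f = A f"
  shows "disagree A (comp Z (sv_neg B)) \<subseteq> sep A B - {e}"
proof
  fix f
  assume f: "f \<in> disagree A (comp Z (sv_neg B))"
  have "comp Z (sv_neg B) e = A e"
    using assms(1,2) by (cases "A e"; cases "B e") (auto simp: sep_def comp_def sv_neg_def)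
  moreover have "comp Z (sv_neg B) f = A f" if "f \<notin> sep A B"
    using assms(3)[OF that] by (cases "A f") (auto simp: comp_def sv_neg_def)
  ultimately show "f \<in> sep A B - {e}"
    using f by (auto simp: disagree_def)
qed

lemma mem_comparables_hamming_chain:
  assumes L: "FAOM L" and "A \<in> S" "S \<subseteq> L" "B \<in> L" "A \<noteq> B" "card (disagree A B) \<le> n"
  shows "B \<in> comparables L (hamming_nbhd L (comparables L (comparables L
           (hamming_nbhd L (comparables L S) n))) n)"
proof -
  define A' where "A' = comp A (sv_neg B)"
  define B' where "B' = comp B (sv_neg A)"
  have "A \<in> L" using assms by blast
  then have A'L: "A' \<in> L" and B'L: "B' \<in> L"
    using FAOM_comp_neg_mem[OF L] \<open>B \<in> L\<close> by (auto simp: A'_def B'_def)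
  have sep_eq: "sep A' B' = disagree A B"
    unfolding A'_def B'_def by (rule sep_comp_neg_comp_neg)
  have fin: "finite (sep A' B')"
    using L A'L B'L unfolding FAOM_def by blast
  obtain e where e: "e \<in> sep A' B'"
    using sep_eq \<open>A \<noteq> B\<close> by (auto simp: disagree_def)
  then obtain Z where "Z \<in> Ie e A' B' L"
    using L A'L B'L unfolding FAOM_def by blast
  then have ZL: "Z \<in> L" and Ze: "Z e = Zero"
    and Z_off: "\<And>f. f \<notin> sep A' B' \<Longrightarrow> Z f = comp A' B' f"
    unfolding Ie_def by auto
  have agree: "Z f = A' f \<and> B' f = A' f" if "f \<notin> sep A' B'" for f
    using Z_off[OF that] comp_neg_eq_off_sep[of f A B] that
    by (auto simp: A'_def B'_def comp_def)
  define W2 where "W2 = comp Z (sv_neg B')"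
  define W where "W = comp Z (sv_neg A')"
  have short: "card (sep A' B' - {e}) < n"
    using card_Diff1_less[OF fin e] sep_eq assms(6) by simp
  have "disagree A' W2 \<subseteq> sep A' B' - {e}"
    unfolding W2_def using e Ze agree by (rule disagree_comp_neg_subset)
  then have "card (disagree A' W2) < n"
    using fin short by (meson card_mono finite_Diff le_less_trans)
  moreover have "disagree B' W \<subseteq> sep A' B' - {e}"
    unfolding W_def using e Ze agree by (subst sep_commute, intro disagree_comp_neg_subset)
      (auto simp: sep_commute)
  then have "card (disagree W B') < n"
    using fin short by (metis card_mono disagree_commute finite_Diff le_less_trans)
  moreover have "A' \<in> comparables L S"
    using A'L assms(2) sv_le_comp by (auto simp: comparables_def A'_def)
  moreover have "W2 \<in> L" "W \<in> L"
    using FAOM_comp_neg_mem[OF L ZL] A'L B'L by (auto simp: W2_def W_def)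
  moreover have "sv_le Z W2" "sv_le Z W" "sv_le B B'"
    by (auto simp: W2_def W_def B'_def sv_le_comp)
  ultimately show ?thesis
    using ZL B'L \<open>B \<in> L\<close> unfolding comparables_def hamming_nbhd_def by blast
qed

lemma finite_hamming_nbhd:
  assumes "FAOM L" "finite S" "S \<subseteq> L"
  shows "finite (hamming_nbhd L S n)"
  using assms(2,3)
proof (induction n arbitrary: S)
  case 0
  then show ?case
    by (simp add: hamming_nbhd_def)
next
  case (Suc n)
  let ?H = "\<lambda>S. hamming_nbhd L S n" and ?C = "comparables L"
  have "hamming_nbhd L S (Suc n) \<subseteq> S \<union> ?C (?H (?C (?C (?H (?C S)))))"
    using mem_comparables_hamming_chain[OF assms(1) _ Suc.prems(2)]
    by (fastforce simp: hamming_nbhd_def)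
  moreover have "finite (?C (?H (?C (?C (?H (?C S))))))"
    by (intro finite_comparables Suc.IH assms(1) Suc.prems comparables_subset
        hamming_nbhd_subset)
  ultimately show ?case
    using Suc.prems(1) by (meson finite_Un finite_subset)
qed

theorem corollary3p7:
  fixes L :: "'e signvec set"
  assumes "FAOM L"
  shows "countable L"
proof (cases "L = {}")
  case False
  then obtain X where "X \<in> L"
    by blast
  then have "L \<subseteq> (\<Union>n. hamming_nbhd L {X} n)"
    by (auto simp: hamming_nbhd_def)
  moreover have "countable (\<Union>n. hamming_nbhd L {X} n)"
    using finite_hamming_nbhd[OF assms, of "{X}"] \<open>X \<in> L\<close>
    by (intro countable_UN) (auto intro: countable_finite)
  ultimately show ?thesis
    by (rule countable_subset)
qed simp

end
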